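(* Let $U$ be a finite nonempty set, $(T,I,N)$ a residual triplet, $\widetilde{R}$ a $T$-preorder relation on $U$, $A$ a fuzzy set on $U$, and $L:\mathbb{R}\times\mathbb{R}\to\mathbb{R}^+$ a loss function of $\lor$-type. Let $\hat{A}:U\to[0,1]$ be an optimal solution of the problem $$\text{minimize }\sum_{u\in U}L(A(u),\hat{A}(u))\quad\text{subject to } T(\widetilde{R}(u,v),\hat{A}(v))\le\hat{A}(u)\ (u,v\in U),\quad 0\le\hat{A}(u)\le1\ (u\in U).$$ Then for every $u\in U$: if $\hat{A}(u)>A(u)$, then $\hat{A}(u)=\max\{T(\widetilde{R}(u,v),\hat{A}(v)); v\in U, v\ne u\}$; and if $\hat{A}(u)<A(u)$, then $\hat{A}(u)=\min\{I(\widetilde{R}(v,u),\hat{A}(v)); v\in U, v\ne u\}$.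
   Context: A residual triplet $(T,I,N)$ consists of a left-continuous $t$-norm $T$, its residual implicator $I(x,y)=\sup\{\beta\in[0,1]: T(x,\beta)\le y\}$ and $N(x)=I(x,0)$. $\widetilde{R}:U\times U\to[0,1]$ is a $T$-preorder if reflexive and $T$-transitive ($T(\widetilde{R}(u,v),\widetilde{R}(v,w))\le\widetilde{R}(u,w)$). A fuzzy set on $U$ is a map $U\to[0,1]$. A loss function $L$ is of $\lor$-type if for every real $a$: $L(a,a)=0$; the functions $x\mapsto L(x,a)$ and $x\mapsto L(a,x)$ are increasing for $x>a$; and these functions are decreasing for $x<a$. *)

theory Defs
  imports Complex_Main
begin

text \<open>A t-norm on [0,1] (the function is total on reals; only values on [0,1] matter).\<close>
definition t_norm :: "(real \<Rightarrow> real \<Rightarrow> real) \<Rightarrow> bool" where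
  "t_norm T \<longleftrightarrow>
     (\<forall>x\<in>{0..1}. \<forall>y\<in>{0..1}. T x y \<in> {0..1}) \<and>
     (\<forall>x\<in>{0..1}. \<forall>y\<in>{0..1}. T x y = T y x) \<and>
     (\<forall>x\<in>{0..1}. \<forall>y\<in>{0..1}. \<forall>z\<in>{0..1}. T x (T y z) = T (T x y) z) \<and>
     (\<forall>x\<in>{0..1}. \<forall>y\<in>{0..1}. \<forall>z\<in>{0..1}. y \<le> z \<longrightarrow> T x y \<le> T x z) \<and>
     (\<forall>x\<in>{0..1}. T x 1 = x)"

text \<open>Left-continuity in the first argument (equivalently in each, by commutativity).\<close>
definition left_continuous_t_norm :: "(real \<Rightarrow> real \<Rightarrow> real) \<Rightarrow> bool" where
  "left_continuous_t_norm T \<longleftrightarrow> t_norm T \<and>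
     (\<forall>y\<in>{0..1}. \<forall>x\<in>{0<..1}. ((\<lambda>z. T z y) \<longlongrightarrow> T x y) (at_left x))"

definition residual_implicator :: "(real \<Rightarrow> real \<Rightarrow> real) \<Rightarrow> real \<Rightarrow> real \<Rightarrow> real" where
  "residual_implicator T x y = Sup {b \<in> {0..1}. T x b \<le> y}"

definition T_preorder :: "(real \<Rightarrow> real \<Rightarrow> real) \<Rightarrow> 'a set \<Rightarrow> ('a \<Rightarrow> 'a \<Rightarrow> real) \<Rightarrow> bool" where
  "T_preorder T U R \<longleftrightarrow>
     (\<forall>u\<in>U. \<forall>v\<in>U. R u v \<in> {0..1}) \<and>
     (\<forall>u\<in>U. R u u = 1) \<and>
     (\<forall>u\<in>U. \<forall>v\<in>U. \<forall>w\<in>U. T (R u v) (R v w) \<le> R u w)"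

definition fuzzy_set :: "'a set \<Rightarrow> ('a \<Rightarrow> real) \<Rightarrow> bool" where
  "fuzzy_set U A \<longleftrightarrow> (\<forall>u\<in>U. A u \<in> {0..1})"

text \<open>Loss function of \<or>-type (increasing/decreasing read as strict).\<close>
definition vee_type_loss :: "(real \<Rightarrow> real \<Rightarrow> real) \<Rightarrow> bool" where
  "vee_type_loss L \<longleftrightarrow>
     (\<forall>a. L a a = 0) \<and>
     (\<forall>a. strict_mono_on {a<..} (\<lambda>x. L x a)) \<and>
     (\<forall>a. strict_mono_on {a<..} (\<lambda>x. L a x)) \<and>
     (\<forall>a x y. x < y \<and> y < a \<longrightarrow> L x a > L y a) \<and>
     (\<forall>a x y. x < y \<and> y < a \<longrightarrow> L a x > L a y)"

definition feasible :: "(real \<Rightarrow> real \<Rightarrow> real) \<Rightarrow> 'a set \<Rightarrow> ('a \<Rightarrow> 'a \<Rightarrow> real) \<Rightarrow> ('a \<Rightarrow> real) \<Rightarrow> bool" where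
  "feasible T U R B \<longleftrightarrow>
     (\<forall>u\<in>U. \<forall>v\<in>U. T (R u v) (B v) \<le> B u) \<and> (\<forall>u\<in>U. 0 \<le> B u \<and> B u \<le> 1)"

definition optimal_solution ::
  "(real \<Rightarrow> real \<Rightarrow> real) \<Rightarrow> 'a set \<Rightarrow> ('a \<Rightarrow> 'a \<Rightarrow> real) \<Rightarrow> ('a \<Rightarrow> real)
    \<Rightarrow> (real \<Rightarrow> real \<Rightarrow> real) \<Rightarrow> ('a \<Rightarrow> real) \<Rightarrow> bool" where
  "optimal_solution T U R A L Ah \<longleftrightarrow> feasible T U R Ah \<and>
     (\<forall>B. feasible T U R B \<longrightarrow> (\<Sum>u\<in>U. L (A u) (Ah u)) \<le> (\<Sum>u\<in>U. L (A u) (B u)))"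

end

theory Submission
  imports Defs
begin

text \<open>If \<open>Ah u > A u\<close>, lower \<open>Ah u\<close> to \<open>b\<close>, the maximum of \<open>A u\<close> and the values
  \<open>T (R u v) (Ah v)\<close> for \<open>v \<noteq> u\<close>. The constraints with \<open>u\<close> on the left still hold by the
  choice of \<open>b\<close>, those with \<open>u\<close> on the right by monotonicity of \<open>T\<close>. Since
  \<open>A u \<le> b \<le> Ah u\<close> and \<open>L\<close> is of \<or>-type, optimality forces \<open>b = Ah u\<close>, and as
  \<open>A u < Ah u\<close> the maximum is attained at some \<open>v \<noteq> u\<close>. Dually, if \<open>Ah u < A u\<close>, raise
  \<open>Ah u\<close> to the minimum of \<open>A u\<close> and the values \<open>I (R v u) (Ah v)\<close>; now the constraints
  with \<open>u\<close> on the right hold by residuation, \<open>T x b \<le> y \<longleftrightarrow> b \<le> I x y\<close>, which is where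
  left-continuity of \<open>T\<close> enters.\<close>

lemma t_norm_range:
  "t_norm T \<Longrightarrow> x \<in> {0..1} \<Longrightarrow> y \<in> {0..1} \<Longrightarrow> T x y \<in> {0..1}"
  unfolding t_norm_def by blast

lemma t_norm_commute:
  "t_norm T \<Longrightarrow> x \<in> {0..1} \<Longrightarrow> y \<in> {0..1} \<Longrightarrow> T x y = T y x"
  unfolding t_norm_def by blast

lemma t_norm_mono:
  "t_norm T \<Longrightarrow> x \<in> {0..1} \<Longrightarrow> y \<in> {0..1} \<Longrightarrow> z \<in> {0..1} \<Longrightarrow> y \<le> z \<Longrightarrow> T x y \<le> T x z"
  unfolding t_norm_def by blast

lemma t_norm_one_right: "t_norm T \<Longrightarrow> x \<in> {0..1} \<Longrightarrow> T x 1 = x"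
  unfolding t_norm_def by blast

lemma t_norm_one_left:
  assumes T: "t_norm T" and x: "x \<in> {0..1}"
  shows "T 1 x = x"
proof -
  have "T 1 x = T x 1" using t_norm_commute[OF T _ x, of 1] by simp
  then show ?thesis using t_norm_one_right[OF T x] by simp
qed

lemma t_norm_zero_right:
  assumes T: "t_norm T" and x: "x \<in> {0..1}"
  shows "T x 0 = 0"
proof -
  have "T x 0 = T 0 x" using t_norm_commute[OF T] x by auto
  also have "\<dots> \<le> T 0 1" using t_norm_mono[OF T] x by auto
  also have "\<dots> = 0" using t_norm_one_right[OF T, of 0] by simp
  finally show ?thesis using t_norm_range[OF T x, of 0] by simp
qed

lemma left_continuous_t_norm_imp_t_norm: "left_continuous_t_norm T \<Longrightarrow> t_norm T"
  unfolding left_continuous_t_norm_def by blast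

lemma left_continuous_t_norm_le_at_left:
  assumes lc: "left_continuous_t_norm T" and x: "x \<in> {0..1}" and c: "c \<in> {0<..1}"
    and below: "\<And>z. 0 < z \<Longrightarrow> z < c \<Longrightarrow> T x z \<le> y"
  shows "T x c \<le> y"
proof -
  note T = left_continuous_t_norm_imp_t_norm[OF lc]
  have lim: "((\<lambda>z. T z x) \<longlongrightarrow> T c x) (at_left c)"
    using lc x c unfolding left_continuous_t_norm_def by auto
  have "0 < c" using c by simp
  have "eventually (\<lambda>z. T z x \<le> y) (at_left c)"
    unfolding eventually_at_left[OF \<open>0 < c\<close>]
  proof (intro exI[of _ 0] conjI allI impI \<open>0 < c\<close>)
    fix z assume "0 < z" "z < c"
    then show "T z x \<le> y" using below t_norm_commute[OF T, of z x] x c by simp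
  qed
  then have "T c x \<le> y" by (rule tendsto_upperbound[OF lim]) simp
  then show ?thesis using t_norm_commute[OF T x, of c] c by simp
qed

lemma residual_implicator_range:
  assumes T: "t_norm T" and x: "x \<in> {0..1}" and y: "y \<in> {0..1}"
  shows "residual_implicator T x y \<in> {0..1}"
proof -
  have "0 \<in> {b \<in> {0..1}. T x b \<le> y}" using t_norm_zero_right[OF T x] y by simp
  then have "0 \<le> Sup {b \<in> {0..1}. T x b \<le> y}" and "Sup {b \<in> {0..1}. T x b \<le> y} \<le> 1"
    by (auto intro!: cSup_upper cSup_least bdd_aboveI[where M = 1])
  then show ?thesis unfolding residual_implicator_def by simp
qed

lemma residual_implicator_upper:
  assumes "b \<in> {0..1}" "T x b \<le> y"
  shows "b \<le> residual_implicator T x y"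
  unfolding residual_implicator_def using assms by (intro cSup_upper) (auto intro: bdd_aboveI[where M = 1])

lemma t_norm_residual_implicator_le:
  assumes lc: "left_continuous_t_norm T" and x: "x \<in> {0..1}" and y: "y \<in> {0..1}"
  shows "T x (residual_implicator T x y) \<le> y"
proof -
  note T = left_continuous_t_norm_imp_t_norm[OF lc]
  define S where "S = {b \<in> {0..1}. T x b \<le> y}"
  have I: "residual_implicator T x y = Sup S" unfolding residual_implicator_def S_def ..
  have "0 \<in> S" unfolding S_def using t_norm_zero_right[OF T x] y by simp
  show ?thesis
  proof (cases "Sup S = 0")
    case True
    then show ?thesis using \<open>0 \<in> S\<close> I unfolding S_def by simp
  next
    case False
    then have c: "Sup S \<in> {0<..1}" using residual_implicator_range[OF T x y] I by simp
    have "T x z \<le> y" if "0 < z" "z < Sup S" for z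
    proof -
      obtain b where "b \<in> S" "z < b" using less_cSupD[of S z] \<open>0 \<in> S\<close> \<open>z < Sup S\<close> by blast
      then have "T x z \<le> T x b" using t_norm_mono[OF T x, of z b] \<open>0 < z\<close> by (simp add: S_def)
      also have "\<dots> \<le> y" using \<open>b \<in> S\<close> by (simp add: S_def)
      finally show ?thesis .
    qed
    then show ?thesis using left_continuous_t_norm_le_at_left[OF lc x c] I by simp
  qed
qed

lemma residual_implicator_adjoint:
  assumes lc: "left_continuous_t_norm T"
    and x: "x \<in> {0..1}" and y: "y \<in> {0..1}" and b: "b \<in> {0..1}"
  shows "T x b \<le> y \<longleftrightarrow> b \<le> residual_implicator T x y"
proof
  assume "T x b \<le> y"
  then show "b \<le> residual_implicator T x y" using b by (rule residual_implicator_upper[rotated])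
next
  assume "b \<le> residual_implicator T x y"
  note T = left_continuous_t_norm_imp_t_norm[OF lc]
  have "T x b \<le> T x (residual_implicator T x y)"
    using t_norm_mono[OF T x b residual_implicator_range[OF T x y]] \<open>b \<le> residual_implicator T x y\<close> .
  also have "\<dots> \<le> y" using t_norm_residual_implicator_le[OF lc x y] .
  finally show "T x b \<le> y" .
qed

text \<open>Nonnegativity is needed at the endpoint: strict monotonicity holds only on the
  open half-lines, so it alone does not give \<open>L a a < L a y\<close>.\<close>

lemma vee_type_loss_less_above:
  assumes L: "vee_type_loss L" and nonneg: "\<And>c. 0 \<le> L a c" and "a \<le> x" "x < y"
  shows "L a x < L a y"
proof -
  have mono: "strict_mono_on {a<..} (L a)" and "L a a = 0"
    using L unfolding vee_type_loss_def by auto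
  show ?thesis
  proof (cases "a = x")
    case True
    have "L a ((a + y) / 2) < L a y" using mono \<open>a = x\<close> \<open>x < y\<close> by (auto intro: strict_mono_onD)
    then show ?thesis using nonneg[of "(a + y) / 2"] \<open>L a a = 0\<close> \<open>a = x\<close> by simp
  next
    case False
    then show ?thesis using mono \<open>a \<le> x\<close> \<open>x < y\<close> by (auto intro: strict_mono_onD)
  qed
qed

lemma vee_type_loss_less_below:
  assumes L: "vee_type_loss L" and nonneg: "\<And>c. 0 \<le> L a c" and "x < y" "y \<le> a"
  shows "L a y < L a x"
proof -
  have anti: "\<And>x y. x < y \<Longrightarrow> y < a \<Longrightarrow> L a y < L a x" and "L a a = 0"
    using L unfolding vee_type_loss_def by auto
  show ?thesis
  proof (cases "a = y")
    case True
    have "L a ((a + x) / 2) < L a x" using anti \<open>a = y\<close> \<open>x < y\<close> by simp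
    then show ?thesis using nonneg[of "(a + x) / 2"] \<open>L a a = 0\<close> \<open>a = y\<close> by simp
  next
    case False
    then show ?thesis using anti \<open>x < y\<close> \<open>y \<le> a\<close> by simp
  qed
qed

lemma optimal_solution_le_fun_upd:
  assumes "finite U" "optimal_solution T U R A L Ah" "u \<in> U" "feasible T U R (Ah(u := b))"
  shows "L (A u) (Ah u) \<le> L (A u) b"
proof -
  have "(\<Sum>w\<in>U. L (A w) (Ah w)) \<le> (\<Sum>w\<in>U. L (A w) ((Ah(u := b)) w))"
    using assms(2,4) unfolding optimal_solution_def by blast
  then show ?thesis using assms(1,3) by (simp add: sum.remove)
qed

lemma feasible_fun_upd:
  assumes T: "t_norm T" and "R u u = 1" and "feasible T U R B" and b: "b \<in> {0..1}"
    and left: "\<And>v. v \<in> U \<Longrightarrow> v \<noteq> u \<Longrightarrow> T (R u v) (B v) \<le> b"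
    and right: "\<And>w. w \<in> U \<Longrightarrow> w \<noteq> u \<Longrightarrow> T (R w u) b \<le> B w"
  shows "feasible T U R (B(u := b))"
  using assms(3) b left right t_norm_one_left[OF T b] \<open>R u u = 1\<close>
  unfolding feasible_def by (auto simp: fun_upd_def)

lemma Max_insert_eq_greater:
  fixes a c :: "'b::linorder"
  assumes "finite S" "Max (insert a S) = c" "a < c"
  shows "Max S = c"
proof -
  have "S \<noteq> {}" using assms by auto
  then show ?thesis using assms by (simp add: max_def split: if_splits)
qed

lemma Min_insert_eq_less:
  fixes a c :: "'b::linorder"
  assumes "finite S" "Min (insert a S) = c" "c < a"
  shows "Min S = c"
proof -
  have "S \<noteq> {}" using assms by auto
  then show ?thesis using assms by (simp add: min_def split: if_splits)
qed

locale optimal_fuzzy_approximation =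
  fixes U :: "'a set" and T L :: "real \<Rightarrow> real \<Rightarrow> real"
    and R :: "'a \<Rightarrow> 'a \<Rightarrow> real" and A Ah :: "'a \<Rightarrow> real"
  assumes finite: "finite U"
    and left_continuous: "left_continuous_t_norm T"
    and preorder: "T_preorder T U R"
    and fuzzy: "fuzzy_set U A"
    and nonneg: "\<And>a b. 0 \<le> L a b"
    and loss: "vee_type_loss L"
    and optimal: "optimal_solution T U R A L Ah"
begin

lemma t_norm_T: "t_norm T"
  using left_continuous by (rule left_continuous_t_norm_imp_t_norm)

lemma R_unit: "u \<in> U \<Longrightarrow> v \<in> U \<Longrightarrow> R u v \<in> {0..1}"
  and R_refl: "u \<in> U \<Longrightarrow> R u u = 1"
  using preorder unfolding T_preorder_def by auto

lemma A_unit: "u \<in> U \<Longrightarrow> A u \<in> {0..1}"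
  using fuzzy unfolding fuzzy_set_def by auto

lemma feasible_Ah: "feasible T U R Ah"
  using optimal unfolding optimal_solution_def by blast

lemma Ah_unit: "u \<in> U \<Longrightarrow> Ah u \<in> {0..1}"
  and Ah_constraint: "u \<in> U \<Longrightarrow> v \<in> U \<Longrightarrow> T (R u v) (Ah v) \<le> Ah u"
  using feasible_Ah unfolding feasible_def by auto

lemma above_target_eq_Max:
  assumes u: "u \<in> U" and above: "A u < Ah u"
  shows "Ah u = Max {T (R u v) (Ah v) | v. v \<in> U \<and> v \<noteq> u}"
proof -
  define S where "S = {T (R u v) (Ah v) | v. v \<in> U \<and> v \<noteq> u}"
  \<comment> \<open>Inserting \<open>A u\<close> keeps the set nonempty when \<open>U = {u}\<close>.\<close>
  define b where "b = Max (insert (A u) S)"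
  have "finite S" unfolding S_def using finite by simp
  have S_le: "\<And>s. s \<in> S \<Longrightarrow> s \<le> Ah u" unfolding S_def using Ah_constraint u by blast
  have "A u \<le> b" unfolding b_def using \<open>finite S\<close> by simp
  have "b \<le> Ah u" unfolding b_def using \<open>finite S\<close> S_le above by simp
  have b_unit: "b \<in> {0..1}" using A_unit[OF u] Ah_unit[OF u] \<open>A u \<le> b\<close> \<open>b \<le> Ah u\<close> by simp
  have "feasible T U R (Ah(u := b))"
  proof (rule feasible_fun_upd[OF t_norm_T R_refl[OF u] feasible_Ah b_unit])
    fix v assume "v \<in> U" "v \<noteq> u"
    then have "T (R u v) (Ah v) \<in> S" unfolding S_def by blast
    then show "T (R u v) (Ah v) \<le> b" unfolding b_def using \<open>finite S\<close> by simp
  next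
    fix w assume "w \<in> U"
    have "T (R w u) b \<le> T (R w u) (Ah u)"
      using t_norm_mono[OF t_norm_T R_unit[OF \<open>w \<in> U\<close> u] b_unit Ah_unit[OF u] \<open>b \<le> Ah u\<close>] .
    also have "\<dots> \<le> Ah w" using Ah_constraint[OF \<open>w \<in> U\<close> u] .
    finally show "T (R w u) b \<le> Ah w" .
  qed
  then have "L (A u) (Ah u) \<le> L (A u) b"
    using optimal_solution_le_fun_upd[OF finite optimal u] by blast
  then have "b = Ah u"
    using vee_type_loss_less_above[OF loss nonneg \<open>A u \<le> b\<close>, of "Ah u"] \<open>b \<le> Ah u\<close> by linarith
  then have "Max S = Ah u"
    using Max_insert_eq_greater[OF \<open>finite S\<close>] above unfolding b_def by blast
  then show ?thesis unfolding S_def by (rule sym)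
qed

lemma below_target_eq_Min:
  assumes u: "u \<in> U" and below: "Ah u < A u"
  shows "Ah u = Min {residual_implicator T (R v u) (Ah v) | v. v \<in> U \<and> v \<noteq> u}"
proof -
  define S where "S = {residual_implicator T (R v u) (Ah v) | v. v \<in> U \<and> v \<noteq> u}"
  define b where "b = Min (insert (A u) S)"
  have adjoint: "T (R w u) c \<le> Ah w \<longleftrightarrow> c \<le> residual_implicator T (R w u) (Ah w)"
    if "w \<in> U" "c \<in> {0..1}" for w c
    using residual_implicator_adjoint[OF left_continuous R_unit[OF \<open>w \<in> U\<close> u] Ah_unit[OF \<open>w \<in> U\<close>]]
      \<open>c \<in> {0..1}\<close> .
  have "finite S" unfolding S_def using finite by simp
  have S_ge: "Ah u \<le> s" if "s \<in> S" for s
  proof -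
    obtain v where v: "v \<in> U" "s = residual_implicator T (R v u) (Ah v)"
      using \<open>s \<in> S\<close> unfolding S_def by blast
    show ?thesis using adjoint[OF v(1) Ah_unit[OF u]] Ah_constraint[OF v(1) u] v(2) by simp
  qed
  have "b \<le> A u" unfolding b_def using \<open>finite S\<close> by simp
  have "Ah u \<le> b" unfolding b_def using \<open>finite S\<close> S_ge below by simp
  have b_unit: "b \<in> {0..1}" using A_unit[OF u] Ah_unit[OF u] \<open>b \<le> A u\<close> \<open>Ah u \<le> b\<close> by simp
  have "feasible T U R (Ah(u := b))"
  proof (rule feasible_fun_upd[OF t_norm_T R_refl[OF u] feasible_Ah b_unit])
    fix v assume "v \<in> U"
    show "T (R u v) (Ah v) \<le> b" using Ah_constraint[OF u \<open>v \<in> U\<close>] \<open>Ah u \<le> b\<close> by simp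
  next
    fix w assume "w \<in> U" "w \<noteq> u"
    then have "residual_implicator T (R w u) (Ah w) \<in> S" unfolding S_def by blast
    then have "b \<le> residual_implicator T (R w u) (Ah w)" unfolding b_def using \<open>finite S\<close> by simp
    then show "T (R w u) b \<le> Ah w" using adjoint[OF \<open>w \<in> U\<close> b_unit] by blast
  qed
  then have "L (A u) (Ah u) \<le> L (A u) b"
    using optimal_solution_le_fun_upd[OF finite optimal u] by blast
  then have "b = Ah u"
    using vee_type_loss_less_below[OF loss nonneg _ \<open>b \<le> A u\<close>, of "Ah u"] \<open>Ah u \<le> b\<close> by linarith
  then have "Min S = Ah u"
    using Min_insert_eq_less[OF \<open>finite S\<close>] below unfolding b_def by blast
  then show ?thesis unfolding S_def by (rule sym)
qed

end

theorem lemma1: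
  fixes U :: "'a set" and T L :: "real \<Rightarrow> real \<Rightarrow> real"
    and R :: "'a \<Rightarrow> 'a \<Rightarrow> real" and A Ah :: "'a \<Rightarrow> real"
  assumes "finite U" and "U \<noteq> {}"
    and "left_continuous_t_norm T"
    and "T_preorder T U R"
    and "fuzzy_set U A"
    and "\<forall>a b. L a b \<ge> 0"
    and "vee_type_loss L"
    and "optimal_solution T U R A L Ah"
  shows "\<forall>u\<in>U.
           (Ah u > A u \<longrightarrow> Ah u = Max {T (R u v) (Ah v) | v. v \<in> U \<and> v \<noteq> u}) \<and>
           (Ah u < A u \<longrightarrow> Ah u = Min {residual_implicator T (R v u) (Ah v) | v. v \<in> U \<and> v \<noteq> u})"
proof -
  interpret optimal_fuzzy_approximation U T L R A Ah
    using assms(1,3-5,7,8) \<open>\<forall>a b. L a b \<ge> 0\<close> by unfold_locales blast+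
  show ?thesis using above_target_eq_Max below_target_eq_Min by blast
qed

end
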